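(* Let $n,d\in\mathbb{N}$, $p\ge1$, $\Omega\subseteq\mathbb{R}^d$ compact, $z\in\mathbb{R}^d\setminus\Omega$. Let $a$ be uniform on $S^{d-1}$ and $b$ uniform on $S^{n-1}$, independently. For $X\in\mathcal{S}_{\le n}(\Omega)$ define $$S_z(X;a,b)=b\cdot\mathrm{sort}\big(a\cdot\rho_{(z)}(X)\big)\in\mathbb{R},$$ where $a\cdot\rho_{(z)}(X)\in\mathbb{R}^n$ is the vector of inner products of $a$ with the $n$ elements of $\rho_{(z)}(X)$ and $\mathrm{sort}$ sorts its entries in nondecreasing order. Then, with the metric $W_1^z$ on inputs and the absolute value on outputs, $S_z$ is uniformly Lipschitz and lower Lipschitz in expectation.
   Context: $\mathcal{S}_{\le n}(\Omega)$ is the set of multisets with at most $n$ elements from $\Omega$; $\rho_{(z)}$ pads a multiset with copies of $z$ to exactly $n$ elements; $W_1(\{\!\!\{ x_j\}\!\!\},\{\!\!\{ y_j\}\!\!\})=\min_{\tau\in S_n}\sum_j\|x_j-y_{\tau(j)}\|_1$ for $n$-element multisets and $W_1^z(S_1,S_2)=W_1(\rho_{(z)}(S_1),\rho_{(z)}(S_2))$. A parametric function $f(x;w)$ is uniformly Lipschitz if there is $L$ with $x\mapsto f(x;w)$ $L$-Lipschitz for all $w$; it is lower Lipschitz in expectation (for the given $p$) if there is $c>0$ with $c^p\le \mathbb{E}_{w}\left[\left(\frac{d_Y(f(x;w),f(x';w))}{d_X(x,x')}\right)^p\right]$ for all $x,x'$ with $d_X(x,x')>0$. *)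

theory Defs
  imports "HOL-Analysis.Analysis" "HOL-Library.Multiset"
begin

text \<open>Inputs live in R^d, modelled as the type real^'d (d = CARD('d)).
  The n-dimensional vectors b are modelled as functions nat => real on the index
  set {..<n} (extensional elements of PiE {..<n} UNIV).\<close>

definition l1norm :: "real ^ 'd \<Rightarrow> real" where
  "l1norm x = (\<Sum>i\<in>UNIV. \<bar>x $ i\<bar>)"

definition multisets_le :: "nat \<Rightarrow> 'a set \<Rightarrow> 'a multiset set" where
  "multisets_le n \<Omega> = {X. size X \<le> n \<and> set_mset X \<subseteq> \<Omega>}"

text \<open>Padding rho_(z): add copies of z until exactly n elements.\<close>
definition pad :: "'a \<Rightarrow> nat \<Rightarrow> 'a multiset \<Rightarrow> 'a multiset" where
  "pad z n X = X + replicate_mset (n - size X) z"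

text \<open>Wasserstein-1 distance for two n-element multisets (l1 ground metric):
  minimum over all matchings, i.e. over all enumerations xs, ys of the two multisets
  of sum_j ||xs_j - ys_j||_1 (equivalently min over permutations tau).\<close>
definition W1 :: "(real ^ 'd) multiset \<Rightarrow> (real ^ 'd) multiset \<Rightarrow> real" where
  "W1 A B = Min {(\<Sum>j<length xs. l1norm (xs ! j - ys ! j)) | xs ys.
                  mset xs = A \<and> mset ys = B}"

definition W1z :: "real ^ 'd \<Rightarrow> nat \<Rightarrow> (real ^ 'd) multiset \<Rightarrow> (real ^ 'd) multiset \<Rightarrow> real" where
  "W1z z n S1 S2 = W1 (pad z n S1) (pad z n S2)"

definition Sz :: "real ^ 'd \<Rightarrow> nat \<Rightarrow> (real ^ 'd) multiset \<Rightarrow> real ^ 'd \<Rightarrow> (nat \<Rightarrow> real) \<Rightarrow> real" where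
  "Sz z n X a b =
     (\<Sum>i<n. b i * sorted_list_of_multiset (image_mset (\<lambda>x. inner a x) (pad z n X)) ! i)"

definition unif_sphere :: "'a::euclidean_space measure" where
  "unif_sphere = distr (uniform_measure lborel (ball 0 1)) borel (\<lambda>x. x /\<^sub>R norm x)"

definition lebesgue_n :: "nat \<Rightarrow> (nat \<Rightarrow> real) measure" where
  "lebesgue_n n = PiM {..<n} (\<lambda>_. lborel)"

definition eucl_norm_n :: "nat \<Rightarrow> (nat \<Rightarrow> real) \<Rightarrow> real" where
  "eucl_norm_n n x = sqrt (\<Sum>i<n. (x i)\<^sup>2)"

definition unif_sphere_n :: "nat \<Rightarrow> (nat \<Rightarrow> real) measure" where
  "unif_sphere_n n =
     distr (uniform_measure (lebesgue_n n) {x \<in> space (lebesgue_n n). eucl_norm_n n x < 1})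
           (PiM {..<n} (\<lambda>_. borel))
           (\<lambda>x. restrict (\<lambda>i. x i / eucl_norm_n n x) {..<n})"

definition sphere_n :: "nat \<Rightarrow> (nat \<Rightarrow> real) set" where
  "sphere_n n = {b \<in> PiE {..<n} (\<lambda>_. UNIV). eucl_norm_n n b = 1}"

end

theory Submission
  imports Defs "HOL-Probability.Probability_Measure"
begin

text \<open>
  Upper bound: sorting is a contraction for the \<open>\<ell>\<^sub>1\<close> distance of real vectors (uncrossing
  a matching never increases its cost), so for an optimal matching of the padded multisets
  \<open>|S(X) - S(X')| \<le> \<Sum>\<^sub>i |\<langle>a, x\<^sub>i - x'\<^sub>i\<rangle>| \<le> W\<^sub>1\<^sup>z(X, X')\<close>, using \<open>|a| = 1\<close> and \<open>|b\<^sub>i| \<le> 1\<close>.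

  Lower bound: for every direction \<open>a\<close>, sorting by \<open>\<langle>a, \<cdot>\<rangle>\<close> matches the two padded multisets via
  index maps \<open>\<sigma>, \<tau>\<close>, so that \<open>S(X) - S(X') = \<langle>b, v\<rangle>\<close> with \<open>v\<^sub>i = \<langle>a, x\<^sub>\<sigma>\<^sub>i - x'\<^sub>\<tau>\<^sub>i\<rangle>\<close>,
  and some matched difference \<open>e\<close> has \<open>|e|\<^sub>1 \<ge> W\<^sub>1\<^sup>z/n\<close>. A uniform point of a sphere lies in the slab
  \<open>|\<langle>u, e\<rangle>| < t|e|\<close> with probability \<open>O(t)\<close> (pull the slab back to the ball,
  where normalising only shrinks it, and integrate out the coordinate in which \<open>e\<close> is largest).
  Only finitely many differences \<open>x\<^sub>i - x'\<^sub>j\<close> and index maps occur, so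
  for small \<open>t\<close> a union bound gives, with probability \<open>\<ge> 1/2\<close>, \<open>|\<langle>a, e\<rangle>| \<ge> t|e|\<close> and
  \<open>|\<langle>b, v\<rangle>| \<ge> t|v|\<close> for all of them; then \<open>|S(X) - S(X')| \<ge> t\<^sup>2 W\<^sub>1\<^sup>z(X, X')/(n d)\<close>.
\<close>

section \<open>Sorting contracts the \<open>\<ell>\<^sub>1\<close> distance\<close>

lemma sorted_list_of_multiset_add_mset_Min:
  fixes x :: "'a::linorder"
  assumes "\<forall>y\<in>#M. x \<le> y"
  shows "sorted_list_of_multiset (add_mset x M) = x # sorted_list_of_multiset M"
  using assms by (simp add: insort_is_Cons)

definition sorted_matching_cost :: "(real \<times> real) multiset \<Rightarrow> real" where
  "sorted_matching_cost P =
     (\<Sum>(u, v)\<leftarrow>zip (sorted_list_of_multiset (image_mset fst P))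
                     (sorted_list_of_multiset (image_mset snd P)). \<bar>u - v\<bar>)"

definition matching_cost :: "(real \<times> real) multiset \<Rightarrow> real" where
  "matching_cost P = (\<Sum>(x, y)\<in>#P. \<bar>x - y\<bar>)"

text \<open>Uncrossing: if \<open>(x\<^sub>0, y\<^sub>1)\<close> and \<open>(x\<^sub>2, y\<^sub>0)\<close> are matched, where \<open>x\<^sub>0\<close> and \<open>y\<^sub>0\<close> are the
  minimal coordinates, rematching them as \<open>(x\<^sub>0, y\<^sub>0)\<close> and \<open>(x\<^sub>2, y\<^sub>1)\<close> does not increase the cost.\<close>
lemma matching_split_Min:
  fixes P :: "(real \<times> real) multiset"
  assumes "P \<noteq> {#}"
  defines "x0 \<equiv> Min (fst ` set_mset P)" and "y0 \<equiv> Min (snd ` set_mset P)"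
  obtains R where "image_mset fst P = add_mset x0 (image_mset fst R)"
    "image_mset snd P = add_mset y0 (image_mset snd R)"
    "\<bar>x0 - y0\<bar> + matching_cost R \<le> matching_cost P" "size R < size P"
    "\<And>q. q \<in># R \<Longrightarrow> x0 \<le> fst q \<and> y0 \<le> snd q"
proof -
  have x0_min: "x0 \<le> fst q" and y0_min: "y0 \<le> snd q" if "q \<in># P" for q
    using that by (auto simp: x0_def y0_def)
  have "x0 \<in> fst ` set_mset P" "y0 \<in> snd ` set_mset P"
    using assms(1) by (auto simp: x0_def y0_def intro!: Min_in)
  then obtain x2 y1 where in1: "(x0, y1) \<in># P" and in2: "(x2, y0) \<in># P" by force
  show thesis
  proof (cases "(x0, y1) = (x2, y0)")
    case True
    define R where "R = P - {#(x0, y0)#}"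
    have P: "P = add_mset (x0, y0) R" unfolding R_def using in1 True by auto
    show thesis
      using P x0_min y0_min by (intro that[of R]) (auto simp: matching_cost_def)
  next
    case False
    define R0 where "R0 = P - {#(x0, y1)#} - {#(x2, y0)#}"
    have P: "P = add_mset (x0, y1) (add_mset (x2, y0) R0)"
    proof -
      have "(x2, y0) \<in># P - {#(x0, y1)#}" using in2 False by (auto simp: in_diff_count)
      then show ?thesis unfolding R0_def using in1 by (metis insert_DiffM)
    qed
    have "\<bar>x0 - y0\<bar> + \<bar>x2 - y1\<bar> \<le> \<bar>x0 - y1\<bar> + \<bar>x2 - y0\<bar>"
      using x0_min[OF in2] y0_min[OF in1] by auto
    then show thesis
      using P x0_min y0_min x0_min[OF in2] y0_min[OF in1]
      by (intro that[of "add_mset (x2, y1) R0"]) (auto simp: matching_cost_def)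
  qed
qed

lemma sorted_matching_cost_le: "sorted_matching_cost P \<le> matching_cost P"
proof (induction "size P" arbitrary: P rule: less_induct)
  case less
  show ?case
  proof (cases "P = {#}")
    case True
    then show ?thesis by (simp add: sorted_matching_cost_def matching_cost_def)
  next
    case False
    define x0 where "x0 = Min (fst ` set_mset P)"
    define y0 where "y0 = Min (snd ` set_mset P)"
    obtain R where fst_P: "image_mset fst P = add_mset x0 (image_mset fst R)"
      and snd_P: "image_mset snd P = add_mset y0 (image_mset snd R)"
      and cost: "\<bar>x0 - y0\<bar> + matching_cost R \<le> matching_cost P" and "size R < size P"
      and R_min: "\<And>q. q \<in># R \<Longrightarrow> x0 \<le> fst q \<and> y0 \<le> snd q"
      using matching_split_Min[OF False] unfolding x0_def y0_def by blast
    have "sorted_matching_cost P = \<bar>x0 - y0\<bar> + sorted_matching_cost R"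
      unfolding sorted_matching_cost_def fst_P snd_P using R_min
      by (subst sorted_list_of_multiset_add_mset_Min, force)+ simp
    also have "\<dots> \<le> \<bar>x0 - y0\<bar> + matching_cost R" using less \<open>size R < size P\<close> by simp
    finally show ?thesis using cost by simp
  qed
qed

lemma sum_abs_sort_diff_le:
  fixes us vs :: "real list"
  assumes "length us = length vs"
  shows "(\<Sum>i<length us. \<bar>sort us ! i - sort vs ! i\<bar>) \<le> (\<Sum>i<length us. \<bar>us ! i - vs ! i\<bar>)"
proof -
  define P where "P = mset (zip us vs)"
  have "image_mset fst P = mset us" "image_mset snd P = mset vs"
    unfolding P_def using assms by (simp_all flip: mset_map)
  then have "sorted_matching_cost P = (\<Sum>i<length us. \<bar>sort us ! i - sort vs ! i\<bar>)"
    unfolding sorted_matching_cost_def using assms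
    by (simp add: sum_list_sum_nth atLeast0LessThan)
  moreover have "matching_cost P = (\<Sum>i<length us. \<bar>us ! i - vs ! i\<bar>)"
    unfolding matching_cost_def P_def using assms
    by (simp add: sum_mset_sum_list sum_list_sum_nth atLeast0LessThan flip: mset_map)
  ultimately show ?thesis using sorted_matching_cost_le by metis
qed

section \<open>Uniform Lipschitz bound\<close>

lemma finite_W1_costs:
  "finite {(\<Sum>j<length xs. l1norm (xs ! j - ys ! j)) | xs ys. mset xs = A \<and> mset ys = B}"
proof -
  let ?cost = "\<lambda>(xs, ys). \<Sum>j<length xs. l1norm (xs ! j - ys ! j)"
  have "finite ({xs. set xs \<subseteq> set_mset A \<and> length xs = size A} \<times>
                {ys. set ys \<subseteq> set_mset B \<and> length ys = size B})"
    by (intro finite_cartesian_product finite_lists_length_eq) auto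
  moreover have "{(\<Sum>j<length xs. l1norm (xs ! j - ys ! j)) | xs ys. mset xs = A \<and> mset ys = B}
      \<subseteq> ?cost ` ({xs. set xs \<subseteq> set_mset A \<and> length xs = size A} \<times>
                   {ys. set ys \<subseteq> set_mset B \<and> length ys = size B})"
    by (force simp: image_iff)
  ultimately show ?thesis by (meson finite_imageI finite_subset)
qed

lemma W1_le:
  assumes "mset xs = A" "mset ys = B"
  shows "W1 A B \<le> (\<Sum>j<length xs. l1norm (xs ! j - ys ! j))"
  unfolding W1_def using assms by (intro Min_le finite_W1_costs) blast

lemma W1_attained:
  obtains xs ys where "mset xs = A" "mset ys = B"
    "W1 A B = (\<Sum>j<length xs. l1norm (xs ! j - ys ! j))"
proof -
  obtain xs ys where "mset xs = A" "mset ys = B" by (metis ex_mset)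
  then have "W1 A B \<in> {(\<Sum>j<length xs. l1norm (xs ! j - ys ! j)) | xs ys. mset xs = A \<and> mset ys = B}"
    unfolding W1_def by (intro Min_in finite_W1_costs) blast
  then show thesis using that by blast
qed

lemma length_eq_if_mset_eq_pad: "mset xs = pad z n X \<Longrightarrow> size X \<le> n \<Longrightarrow> length xs = n"
  by (metis size_mset add_diff_inverse_nat leD pad_def size_replicate_mset size_union)

lemma obtain_sorted_enumeration:
  fixes f :: "'a \<Rightarrow> 'b::linorder"
  obtains xs where "mset xs = M" "sorted (map f xs)"
proof -
  obtain ys where "mset ys = M" by (metis ex_mset)
  then show thesis by (intro that[of "sort_key f ys"]) auto
qed

lemma Sz_eq_sum_sort:
  assumes "mset xs = pad z n X"
  shows "Sz z n X a b = (\<Sum>i<n. b i * sort (map (inner a) xs) ! i)"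
  unfolding Sz_def assms[symmetric] by (simp flip: mset_map)

lemma norm_le_l1norm: "norm x \<le> l1norm x"
  unfolding l1norm_def by (rule norm_le_l1_cart)

lemma l1norm_le_CARD_norm: "l1norm (x :: real ^ 'd) \<le> CARD('d) * norm x"
proof -
  have "l1norm x \<le> (\<Sum>i\<in>(UNIV :: 'd set). norm x)"
    unfolding l1norm_def by (intro sum_mono component_le_norm_cart)
  then show ?thesis by simp
qed

lemma abs_le_eucl_norm_n: "i < n \<Longrightarrow> \<bar>x i\<bar> \<le> eucl_norm_n n x"
  unfolding eucl_norm_n_def
  by (metis member_le_sum real_sqrt_abs real_sqrt_le_mono finite_lessThan lessThan_iff zero_le_power2)

lemma abs_le_1_if_sphere_n: "b \<in> sphere_n n \<Longrightarrow> i < n \<Longrightarrow> \<bar>b i\<bar> \<le> 1"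
  using abs_le_eucl_norm_n[of i n b] by (simp add: sphere_n_def)

lemma Sz_diff_le_W1z:
  assumes "norm a = 1" "b \<in> sphere_n n" "size X \<le> n" "size X' \<le> n"
  shows "\<bar>Sz z n X a b - Sz z n X' a b\<bar> \<le> W1z z n X X'"
proof -
  obtain xs ys where xs: "mset xs = pad z n X" and ys: "mset ys = pad z n X'"
    and W: "W1z z n X X' = (\<Sum>j<length xs. l1norm (xs ! j - ys ! j))"
    unfolding W1z_def using W1_attained by blast
  have len: "length xs = n" "length ys = n"
    using xs ys assms(3,4) by (simp_all add: length_eq_if_mset_eq_pad)
  define u where "u = map (inner a) xs"
  define v where "v = map (inner a) ys"
  have "\<bar>Sz z n X a b - Sz z n X' a b\<bar> = \<bar>\<Sum>i<n. b i * (sort u ! i - sort v ! i)\<bar>"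
    by (simp add: Sz_eq_sum_sort[OF xs] Sz_eq_sum_sort[OF ys] u_def v_def
        sum_subtractf right_diff_distrib)
  also have "\<dots> \<le> (\<Sum>i<n. \<bar>sort u ! i - sort v ! i\<bar>)"
    using abs_le_1_if_sphere_n[OF assms(2)]
    by (intro order.trans[OF sum_abs] sum_mono) (auto simp: abs_mult intro!: mult_left_le_one_le)
  also have "\<dots> \<le> (\<Sum>i<n. \<bar>u ! i - v ! i\<bar>)"
    using sum_abs_sort_diff_le[of u v] len by (simp add: u_def v_def)
  also have "\<dots> \<le> (\<Sum>i<n. l1norm (xs ! i - ys ! i))"
  proof (intro sum_mono)
    fix i assume "i \<in> {..<n}"
    then have "\<bar>u ! i - v ! i\<bar> = \<bar>inner a (xs ! i - ys ! i)\<bar>"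
      using len by (simp add: u_def v_def inner_diff_right)
    also have "\<dots> \<le> norm (xs ! i - ys ! i)"
      using Cauchy_Schwarz_ineq2[of a "xs ! i - ys ! i"] assms(1) by simp
    finally show "\<bar>u ! i - v ! i\<bar> \<le> l1norm (xs ! i - ys ! i)"
      using norm_le_l1norm by (rule order.trans)
  qed
  finally show ?thesis using W len by simp
qed

section \<open>Volumes of slabs\<close>

lemma emeasure_lborel_abs_affine_less:
  fixes c e s :: real
  assumes "e \<noteq> 0"
  shows "emeasure lborel {y. \<bar>c + e * y\<bar> < s} \<le> ennreal (2 * s / \<bar>e\<bar>)"
proof (cases "s \<ge> 0")
  case True
  have "{y. \<bar>c + e * y\<bar> < s} \<subseteq> {- c / e - s / \<bar>e\<bar> <..< - c / e + s / \<bar>e\<bar>}"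
  proof
    fix y assume "y \<in> {y. \<bar>c + e * y\<bar> < s}"
    then have "\<bar>e\<bar> * \<bar>y - (- c / e)\<bar> < s"
      using assms by (simp add: abs_mult[symmetric] algebra_simps)
    then have "\<bar>y - (- c / e)\<bar> < s / \<bar>e\<bar>"
      using assms by (simp add: field_simps)
    then show "y \<in> {- c / e - s / \<bar>e\<bar> <..< - c / e + s / \<bar>e\<bar>}" by auto
  qed
  then have "emeasure lborel {y. \<bar>c + e * y\<bar> < s}
      \<le> emeasure lborel {- c / e - s / \<bar>e\<bar> <..< - c / e + s / \<bar>e\<bar>}"
    by (intro emeasure_mono) auto
  then show ?thesis using assms True by simp
next
  case False
  then have "{y. \<bar>c + e * y\<bar> < s} = {}" by auto
  then show ?thesis by simp
qed

lemma emeasure_PiM_insert_le_if_slices_le: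
  fixes J :: "'i set" and r :: ennreal
  assumes "finite J" "k \<notin> J"
    and "S \<in> sets (PiM (insert k J) (\<lambda>_. lborel :: real measure))" "C \<in> sets (PiM J (\<lambda>_. lborel))"
    and "\<And>x. T x \<in> sets lborel" "\<And>x. x \<in> C \<Longrightarrow> emeasure lborel (T x) \<le> r"
    and "\<And>x y. x \<in> space (PiM J (\<lambda>_. lborel)) \<Longrightarrow> x(k := y) \<in> S \<Longrightarrow> x \<in> C \<and> y \<in> T x"
  shows "emeasure (PiM (insert k J) (\<lambda>_. lborel)) S \<le> r * emeasure (PiM J (\<lambda>_. lborel)) C"
proof -
  interpret product_sigma_finite "\<lambda>_::'i. lborel :: real measure"
    by unfold_locales
  have "emeasure (PiM (insert k J) (\<lambda>_. lborel)) S
      = (\<integral>\<^sup>+ x. (\<integral>\<^sup>+ y. indicator S (x(k := y)) \<partial>lborel) \<partial>PiM J (\<lambda>_. lborel))"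
    using assms(1-3) by (subst product_nn_integral_insert[symmetric]) auto
  also have "\<dots> \<le> (\<integral>\<^sup>+ x. (\<integral>\<^sup>+ y. indicator C x * indicator (T x) y \<partial>lborel) \<partial>PiM J (\<lambda>_. lborel))"
    using assms(7) by (intro nn_integral_mono) (auto simp: indicator_def)
  also have "\<dots> = (\<integral>\<^sup>+ x. indicator C x * emeasure lborel (T x) \<partial>PiM J (\<lambda>_. lborel))"
    using assms(5) by (simp add: nn_integral_cmult)
  also have "\<dots> \<le> (\<integral>\<^sup>+ x. r * indicator C x \<partial>PiM J (\<lambda>_. lborel))"
    using assms(6) by (intro nn_integral_mono) (auto simp: indicator_def)
  also have "\<dots> = r * emeasure (PiM J (\<lambda>_. lborel)) C"
    using assms(4) by (rule nn_integral_cmult_indicator)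
  finally show ?thesis .
qed

lemma emeasure_PiM_cube_slab_le:
  fixes I :: "'i set" and e :: "'i \<Rightarrow> real"
  assumes "finite I" "k \<in> I" "e k \<noteq> 0" "s \<ge> 0"
  shows "emeasure (PiM I (\<lambda>_. lborel))
     {x \<in> space (PiM I (\<lambda>_. lborel)). (\<forall>i\<in>I. \<bar>x i\<bar> \<le> 1) \<and> \<bar>\<Sum>i\<in>I. e i * x i\<bar> < s}
     \<le> ennreal (2 ^ card I * s / \<bar>e k\<bar>)"
proof -
  define J where "J = I - {k}"
  have I: "I = insert k J" "k \<notin> J" "finite J" using assms unfolding J_def by auto
  define C where "C = PiE J (\<lambda>_. {-1..1 :: real})"
  have "emeasure (PiM (insert k J) (\<lambda>_. lborel))
      {x \<in> space (PiM I (\<lambda>_. lborel)). (\<forall>i\<in>I. \<bar>x i\<bar> \<le> 1) \<and> \<bar>\<Sum>i\<in>I. e i * x i\<bar> < s}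
      \<le> ennreal (2 * s / \<bar>e k\<bar>) * emeasure (PiM J (\<lambda>_. lborel)) C"
  proof (rule emeasure_PiM_insert_le_if_slices_le[where T="\<lambda>x. {y. \<bar>(\<Sum>i\<in>J. e i * x i) + e k * y\<bar> < s}"])
    show "C \<in> sets (PiM J (\<lambda>_. lborel))" unfolding C_def by (auto intro!: sets_PiM_I_finite I)
    fix x y assume x: "x \<in> space (PiM J (\<lambda>_. lborel :: real measure))"
      and "x(k := y) \<in> {x \<in> space (PiM I (\<lambda>_. lborel)). (\<forall>i\<in>I. \<bar>x i\<bar> \<le> 1) \<and> \<bar>\<Sum>i\<in>I. e i * x i\<bar> < s}"
    moreover have "(\<Sum>i\<in>I. e i * (x(k := y)) i) = (\<Sum>i\<in>J. e i * x i) + e k * y"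
      using I by (auto intro!: sum.cong)
    ultimately show "x \<in> C \<and> y \<in> {y. \<bar>(\<Sum>i\<in>J. e i * x i) + e k * y\<bar> < s}"
      using I by (auto simp: C_def space_PiM PiE_iff abs_le_iff split: if_splits; metis)
  qed (use I assms emeasure_lborel_abs_affine_less in auto)
  also have "emeasure (PiM J (\<lambda>_. lborel)) C = ennreal (2 ^ card J)"
  proof -
    interpret product_sigma_finite "\<lambda>_::'i. lborel :: real measure" by unfold_locales
    show ?thesis unfolding C_def using I by (subst emeasure_PiM) (auto simp: ennreal_power[symmetric])
  qed
  also have "ennreal (2 * s / \<bar>e k\<bar>) * ennreal (2 ^ card J) = ennreal (2 ^ card I * s / \<bar>e k\<bar>)"
    using I assms by (simp add: ennreal_mult'[symmetric] card_insert_if)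
  finally show ?thesis unfolding I(1) .
qed

lemma exists_Basis_norm_le_DIM_inner:
  fixes e :: "'a::euclidean_space"
  shows "\<exists>k\<in>Basis. norm e \<le> DIM('a) * \<bar>inner e k\<bar>"
proof (rule ccontr)
  assume "\<not> ?thesis"
  then have "\<bar>inner e k\<bar> < norm e / DIM('a)" if "k \<in> Basis" for k
    using that by (auto simp: field_simps)
  then have "(\<Sum>k\<in>Basis. \<bar>inner e k\<bar>) < (\<Sum>k\<in>(Basis::'a set). norm e / DIM('a))"
    by (intro sum_strict_mono) auto
  then show False using norm_le_l1[of e] by simp
qed

lemma exists_eucl_norm_n_le_component:
  assumes "n > 0"
  shows "\<exists>k<n. eucl_norm_n n w \<le> n * \<bar>w k\<bar>"
proof (rule ccontr)
  assume "\<not> ?thesis"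
  then have "\<bar>w k\<bar> < eucl_norm_n n w / n" if "k < n" for k
    using that assms by (auto simp: field_simps)
  then have "(\<Sum>k<n. \<bar>w k\<bar>) < (\<Sum>k<n. eucl_norm_n n w / n)"
    using assms by (intro sum_strict_mono) auto
  then show False
    using assms L2_set_le_sum_abs[of w "{..<n}"] by (simp add: eucl_norm_n_def L2_set_def)
qed

lemma emeasure_ball_slab_le_cube_slab:
  fixes e :: "'a::euclidean_space"
  shows "emeasure lborel {x::'a. norm x < 1 \<and> \<bar>inner x e\<bar> < s}
    \<le> emeasure (\<Pi>\<^sub>M b\<in>Basis. lborel)
         {f \<in> space (\<Pi>\<^sub>M b\<in>Basis. lborel). (\<forall>i\<in>Basis. \<bar>f i\<bar> \<le> 1) \<and> \<bar>\<Sum>i\<in>Basis. inner i e * f i\<bar> < s}"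
    (is "_ \<le> emeasure ?M ?S")
proof -
  define coords where "coords f = (\<Sum>b\<in>Basis. f b *\<^sub>R b :: 'a)" for f
  have coord_le: "\<bar>f i\<bar> \<le> norm (coords f)" if "i \<in> Basis" for f i
    using Basis_le_norm[OF that, of "coords f"] that
    by (simp add: coords_def inner_sum_left inner_Basis if_distrib cong: if_cong)
  have inner_coords: "inner (coords f) e = (\<Sum>i\<in>Basis. inner i e * f i)" for f
    by (simp add: coords_def inner_sum_left mult.commute)
  have "emeasure lborel {x::'a. norm x < 1 \<and> \<bar>inner x e\<bar> < s}
      = emeasure ?M (coords -` {x. norm x < 1 \<and> \<bar>inner x e\<bar> < s} \<inter> space ?M)"
    unfolding coords_def by (subst lborel_eq) (simp add: emeasure_distr)
  also have "\<dots> \<le> emeasure ?M ?S"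
  proof (rule emeasure_mono)
    show "?S \<in> sets ?M" by measurable
    show "coords -` {x. norm x < 1 \<and> \<bar>inner x e\<bar> < s} \<inter> space ?M \<subseteq> ?S"
    proof safe
      fix f and i :: 'a assume "norm (coords f) < 1" "i \<in> Basis"
      then show "\<bar>f i\<bar> \<le> 1" using coord_le[of i f] by linarith
    next
      fix f assume "\<bar>inner (coords f) e\<bar> < s"
      then show "\<bar>\<Sum>i\<in>Basis. inner i e * f i\<bar> < s" by (simp only: inner_coords)
    qed
  qed
  finally show ?thesis .
qed

lemma emeasure_ball_slab_le:
  fixes e :: "'a::euclidean_space" and s :: real
  assumes "e \<noteq> 0" "s \<ge> 0"
  shows "emeasure lborel {x::'a. norm x < 1 \<and> \<bar>inner x e\<bar> < s}
     \<le> ennreal (2 ^ DIM('a) * real DIM('a) * s / norm e)"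
proof -
  obtain k where k: "k \<in> Basis" "norm e \<le> DIM('a) * \<bar>inner e k\<bar>"
    using exists_Basis_norm_le_DIM_inner by blast
  then have ek: "inner k e \<noteq> 0" using assms(1) by (auto simp: inner_commute)
  have "emeasure lborel {x::'a. norm x < 1 \<and> \<bar>inner x e\<bar> < s}
      \<le> ennreal (2 ^ DIM('a) * s / \<bar>inner k e\<bar>)"
    using k ek assms
    by (intro order.trans[OF emeasure_ball_slab_le_cube_slab] emeasure_PiM_cube_slab_le) auto
  also have "\<dots> \<le> ennreal (2 ^ DIM('a) * real DIM('a) * s / norm e)"
  proof (intro ennreal_leI)
    have "s / \<bar>inner k e\<bar> \<le> real DIM('a) * s / norm e"
      using k ek assms by (simp add: field_simps inner_commute mult_left_mono)
    then have "2 ^ DIM('a) * (s / \<bar>inner k e\<bar>) \<le> 2 ^ DIM('a) * (real DIM('a) * s / norm e)"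
      by (intro mult_left_mono) auto
    then show "2 ^ DIM('a) * s / \<bar>inner k e\<bar> \<le> 2 ^ DIM('a) * real DIM('a) * s / norm e"
      by (simp add: mult.assoc)
  qed
  finally show ?thesis .
qed

lemma emeasure_distr_uniform_measure_le:
  assumes "f \<in> measurable M N" "A \<in> sets N" "B \<in> sets M" "S \<in> sets M"
    and "B \<inter> f -` A \<inter> space M \<subseteq> S"
  shows "emeasure (distr (uniform_measure M B) N f) A \<le> emeasure M S / emeasure M B"
proof -
  have "f \<in> measurable (uniform_measure M B) N"
    using assms(1) by (simp cong: measurable_cong_sets)
  then have "emeasure (distr (uniform_measure M B) N f) A
      = emeasure M (B \<inter> (f -` A \<inter> space M)) / emeasure M B"
    using assms(1-3) by (simp add: emeasure_distr measurable_sets)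
  also have "\<dots> \<le> emeasure M S / emeasure M B"
    using assms(4,5) by (intro divide_right_mono_ennreal emeasure_mono) (auto simp: Int_assoc)
  finally show ?thesis .
qed

lemma sets_unif_sphere [simp, measurable_cong]:
  "sets (unif_sphere :: 'a::euclidean_space measure) = sets borel"
  by (simp add: unif_sphere_def)

lemma space_unif_sphere [simp]: "space (unif_sphere :: 'a::euclidean_space measure) = UNIV"
  by (simp add: unif_sphere_def)

lemma emeasure_lborel_unit_ball:
  "emeasure lborel (ball (0::'a::euclidean_space) 1) = ennreal (unit_ball_vol DIM('a))"
  by (simp add: emeasure_ball)

lemma prob_space_unif_sphere: "prob_space (unif_sphere :: 'a::euclidean_space measure)"
  unfolding unif_sphere_def
proof (rule prob_space.prob_space_distr)
  have "unit_ball_vol DIM('a) \<noteq> 0"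
    using unit_ball_vol_pos[of "DIM('a)"] by linarith
  then show "prob_space (uniform_measure lborel (ball (0::'a) 1))"
    by (intro prob_space_uniform_measure) (simp_all add: emeasure_lborel_unit_ball)
qed simp

lemma abs_inner_le_abs_inner_normalized:
  fixes x e :: "'a::real_inner"
  assumes "norm x \<le> 1"
  shows "\<bar>inner x e\<bar> \<le> \<bar>inner (x /\<^sub>R norm x) e\<bar>"
proof (cases "x = 0")
  case False
  then have "\<bar>inner x e\<bar> = norm x * \<bar>inner (x /\<^sub>R norm x) e\<bar>" by (simp add: abs_mult)
  also have "\<dots> \<le> \<bar>inner (x /\<^sub>R norm x) e\<bar>" using assms by (simp add: mult_left_le_one_le)
  finally show ?thesis .
qed simp

definition slab_const :: "'a::euclidean_space itself \<Rightarrow> real" where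
  "slab_const _ = 2 ^ DIM('a) * real DIM('a) / unit_ball_vol DIM('a)"

lemma slab_const_pos: "slab_const TYPE('a::euclidean_space) > 0"
  by (simp add: slab_const_def)

lemma emeasure_unif_sphere_slab_le:
  fixes e :: "'a::euclidean_space"
  assumes "t \<ge> 0"
  shows "emeasure unif_sphere {a. \<bar>inner a e\<bar> < t * norm e} \<le> ennreal (slab_const TYPE('a) * t)"
proof (cases "e = 0")
  case False
  let ?S = "{x::'a. norm x < 1 \<and> \<bar>inner x e\<bar> < t * norm e}"
  have "ball 0 1 \<inter> (\<lambda>x. x /\<^sub>R norm x) -` {a. \<bar>inner a e\<bar> < t * norm e} \<subseteq> ?S"
  proof clarify
    fix x :: 'a assume "x \<in> ball 0 1" "\<bar>inner (x /\<^sub>R norm x) e\<bar> < t * norm e"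
    then show "norm x < 1 \<and> \<bar>inner x e\<bar> < t * norm e"
      using abs_inner_le_abs_inner_normalized[of x e] by simp
  qed
  then have "emeasure unif_sphere {a. \<bar>inner a e\<bar> < t * norm e}
      \<le> emeasure lborel ?S / emeasure lborel (ball (0::'a) 1)"
    unfolding unif_sphere_def by (intro emeasure_distr_uniform_measure_le) auto
  also have "\<dots> \<le> ennreal (2 ^ DIM('a) * real DIM('a) * (t * norm e) / norm e) / ennreal (unit_ball_vol DIM('a))"
    unfolding emeasure_lborel_unit_ball using False assms
    by (intro divide_right_mono_ennreal emeasure_ball_slab_le) auto
  also have "\<dots> = ennreal (slab_const TYPE('a) * t)"
    using False assms by (subst divide_ennreal) (auto simp: slab_const_def)
  finally show ?thesis .
qed simp

definition ball_n :: "nat \<Rightarrow> (nat \<Rightarrow> real) set" where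
  "ball_n n = {x \<in> space (lebesgue_n n). eucl_norm_n n x < 1}"

definition normalize_n :: "nat \<Rightarrow> (nat \<Rightarrow> real) \<Rightarrow> nat \<Rightarrow> real" where
  "normalize_n n x = restrict (\<lambda>i. x i / eucl_norm_n n x) {..<n}"

lemma unif_sphere_n_eq:
  "unif_sphere_n n = distr (uniform_measure (lebesgue_n n) (ball_n n)) (PiM {..<n} (\<lambda>_. borel)) (normalize_n n)"
  unfolding unif_sphere_n_def ball_n_def normalize_n_def[abs_def] by (rule refl)

lemma eucl_norm_n_nonneg: "eucl_norm_n n x \<ge> 0"
  by (simp add: eucl_norm_n_def sum_nonneg)

lemma borel_measurable_eucl_norm_n_lebesgue_n [measurable]:
  "eucl_norm_n n \<in> borel_measurable (lebesgue_n n)"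
  unfolding eucl_norm_n_def lebesgue_n_def by measurable

lemma sets_ball_n [measurable]: "ball_n n \<in> sets (lebesgue_n n)"
  unfolding ball_n_def by measurable

lemma measurable_normalize_n:
  "normalize_n n \<in> measurable (lebesgue_n n) (PiM {..<n} (\<lambda>_. borel))"
  unfolding normalize_n_def
proof (rule measurable_restrict)
  fix i assume "i \<in> {..<n}"
  then have "(\<lambda>x. x i) \<in> borel_measurable (lebesgue_n n)"
    using measurable_component_singleton[of i "{..<n}" "\<lambda>_. lborel :: real measure"]
    by (simp add: lebesgue_n_def)
  then show "(\<lambda>x. x i / eucl_norm_n n x) \<in> borel_measurable (lebesgue_n n)"
    by (intro borel_measurable_divide borel_measurable_eucl_norm_n_lebesgue_n)
qed

lemma ball_n_subset_cube: "ball_n n \<subseteq> PiE {..<n} (\<lambda>_. {-1..1})"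
proof
  fix x assume x: "x \<in> ball_n n"
  then have "\<bar>x i\<bar> \<le> 1" if "i < n" for i
    using abs_le_eucl_norm_n[OF that, of x] by (simp add: ball_n_def)
  then show "x \<in> PiE {..<n} (\<lambda>_. {-1..1})"
    using x by (auto simp: ball_n_def lebesgue_n_def space_PiM PiE_iff abs_le_iff)
qed

lemma emeasure_ball_n_finite: "emeasure (lebesgue_n n) (ball_n n) \<noteq> top"
proof -
  interpret product_sigma_finite "\<lambda>_::nat. lborel :: real measure" by unfold_locales
  have "emeasure (lebesgue_n n) (ball_n n) \<le> emeasure (lebesgue_n n) (PiE {..<n} (\<lambda>_. {-1..1}))"
    by (intro emeasure_mono ball_n_subset_cube) (auto simp: lebesgue_n_def intro!: sets_PiM_I_finite)
  also have "\<dots> = ennreal (2 ^ n)"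
    unfolding lebesgue_n_def by (subst emeasure_PiM) (auto simp: ennreal_power[symmetric])
  finally show ?thesis using neq_top_trans[OF ennreal_neq_top] by blast
qed

text \<open>The ball of radius \<open>1/2\<close>, whose volume the library computes, lies inside \<open>ball_n n\<close>.\<close>
lemma measure_ball_n_ge: "unit_ball_vol n / 2 ^ n \<le> measure (lebesgue_n n) (ball_n n)"
proof -
  have "ennreal (unit_ball_vol n / 2 ^ n) = emeasure (PiM {..<n} (\<lambda>_. lborel :: real measure))
      ({f. sqrt (\<Sum>i\<in>{..<n}. (f i)\<^sup>2) \<le> 1 / 2} \<inter> space (PiM {..<n} (\<lambda>_. lborel)))"
    by (subst emeasure_cball_aux) (auto simp: field_simps)
  also have "\<dots> \<le> emeasure (lebesgue_n n) (ball_n n)"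
    unfolding lebesgue_n_def[symmetric]
    by (intro emeasure_mono sets_ball_n)
      (auto simp: ball_n_def lebesgue_n_def eucl_norm_n_def[symmetric])
  finally show ?thesis
    using emeasure_ball_n_finite by (simp add: emeasure_eq_ennreal_measure ennreal_le_iff)
qed

lemma measure_ball_n_pos: "measure (lebesgue_n n) (ball_n n) > 0"
proof -
  have "unit_ball_vol n / 2 ^ n > 0" by simp
  then show ?thesis using measure_ball_n_ge[of n] by linarith
qed

lemma sets_unif_sphere_n [measurable_cong]:
  "sets (unif_sphere_n n) = sets (PiM {..<n} (\<lambda>_. borel :: real measure))"
  by (simp add: unif_sphere_n_def)

lemma space_unif_sphere_n: "space (unif_sphere_n n) = PiE {..<n} (\<lambda>_. UNIV)"
  using sets_eq_imp_space_eq[OF sets_unif_sphere_n[of n]] by (simp add: space_PiM)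

lemma prob_space_unif_sphere_n: "prob_space (unif_sphere_n n)"
  unfolding unif_sphere_n_eq
proof (rule prob_space.prob_space_distr)
  show "prob_space (uniform_measure (lebesgue_n n) (ball_n n))"
    using emeasure_ball_n_finite[of n] measure_ball_n_pos[of n]
    by (intro prob_space_uniform_measure) (auto simp: emeasure_eq_ennreal_measure)
  show "normalize_n n \<in> measurable (uniform_measure (lebesgue_n n) (ball_n n)) (PiM {..<n} (\<lambda>_. borel))"
    using measurable_normalize_n by (simp cong: measurable_cong_sets)
qed

lemma abs_sum_le_abs_sum_normalize_n:
  assumes "eucl_norm_n n x \<le> 1"
  shows "\<bar>\<Sum>i<n. w i * x i\<bar> \<le> \<bar>\<Sum>i<n. normalize_n n x i * w i\<bar>"
proof (cases "eucl_norm_n n x = 0")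
  case True
  then have "x i = 0" if "i < n" for i using abs_le_eucl_norm_n[OF that, of x] by simp
  then show ?thesis by simp
next
  case False
  then have "\<bar>\<Sum>i<n. w i * x i\<bar> = eucl_norm_n n x * \<bar>\<Sum>i<n. normalize_n n x i * w i\<bar>"
    by (simp add: normalize_n_def sum_divide_distrib[symmetric] abs_mult mult.commute
        eucl_norm_n_nonneg)
  also have "\<dots> \<le> \<bar>\<Sum>i<n. normalize_n n x i * w i\<bar>"
    using assms by (simp add: mult_left_le_one_le eucl_norm_n_nonneg)
  finally show ?thesis .
qed

definition slab_const_n :: "nat \<Rightarrow> real" where
  "slab_const_n n = 4 ^ n * n / unit_ball_vol n"

lemma slab_const_n_nonneg: "slab_const_n n \<ge> 0"
  by (simp add: slab_const_n_def)

lemma emeasure_unif_sphere_n_le_cube_slab: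
  "emeasure (unif_sphere_n n) {b \<in> space (unif_sphere_n n). \<bar>\<Sum>i<n. b i * w i\<bar> < s}
    \<le> emeasure (PiM {..<n} (\<lambda>_. lborel))
         {x \<in> space (PiM {..<n} (\<lambda>_. lborel)). (\<forall>i\<in>{..<n}. \<bar>x i\<bar> \<le> 1) \<and> \<bar>\<Sum>i\<in>{..<n}. w i * x i\<bar> < s}
       / ennreal (measure (lebesgue_n n) (ball_n n))"
proof -
  let ?A = "{b \<in> PiE {..<n} (\<lambda>_. UNIV). \<bar>\<Sum>i<n. b i * w i\<bar> < s}"
  let ?S = "{x \<in> space (PiM {..<n} (\<lambda>_. lborel :: real measure)).
              (\<forall>i\<in>{..<n}. \<bar>x i\<bar> \<le> 1) \<and> \<bar>\<Sum>i\<in>{..<n}. w i * x i\<bar> < s}"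
  have "ball_n n \<inter> normalize_n n -` ?A \<inter> space (lebesgue_n n) \<subseteq> ?S"
  proof
    fix x assume "x \<in> ball_n n \<inter> normalize_n n -` ?A \<inter> space (lebesgue_n n)"
    then have x: "x \<in> ball_n n" "normalize_n n x \<in> ?A" by auto
    have "x \<in> space (PiM {..<n} (\<lambda>_. lborel))" using x(1) by (simp add: ball_n_def lebesgue_n_def)
    moreover have "\<forall>i\<in>{..<n}. \<bar>x i\<bar> \<le> 1"
      using subsetD[OF ball_n_subset_cube x(1)] by (auto simp: PiE_iff abs_le_iff)
    moreover have "\<bar>\<Sum>i<n. w i * x i\<bar> < s"
      using abs_sum_le_abs_sum_normalize_n[of n x w] x by (simp add: ball_n_def)
    ultimately show "x \<in> ?S" by simp
  qed
  then have "emeasure (unif_sphere_n n) ?A \<le> emeasure (lebesgue_n n) ?S / emeasure (lebesgue_n n) (ball_n n)"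
  proof (unfold unif_sphere_n_eq, intro emeasure_distr_uniform_measure_le measurable_normalize_n sets_ball_n)
    show "?A \<in> sets (PiM {..<n} (\<lambda>_. borel))"
      unfolding sets_unif_sphere_n[symmetric] space_unif_sphere_n[symmetric] by measurable
    show "?S \<in> sets (lebesgue_n n)" unfolding lebesgue_n_def by measurable
  qed
  then show ?thesis
    unfolding space_unif_sphere_n emeasure_eq_ennreal_measure[OF emeasure_ball_n_finite]
    by (simp add: lebesgue_n_def)
qed

lemma emeasure_unif_sphere_n_slab_le:
  assumes "t \<ge> 0"
  shows "emeasure (unif_sphere_n n)
     {b \<in> space (unif_sphere_n n). \<bar>\<Sum>i<n. b i * w i\<bar> < t * eucl_norm_n n w}
     \<le> ennreal (slab_const_n n * t)"
proof (cases "\<exists>i<n. w i \<noteq> 0")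
  case False
  then have "eucl_norm_n n w = 0" by (simp add: eucl_norm_n_def)
  then show ?thesis by simp
next
  case True
  then have "n > 0" by auto
  then obtain k where k: "k < n" "eucl_norm_n n w \<le> n * \<bar>w k\<bar>"
    using exists_eucl_norm_n_le_component by blast
  from True obtain i where "i < n" "w i \<noteq> 0" by blast
  then have w_pos: "eucl_norm_n n w > 0"
    using abs_le_eucl_norm_n[of i n w] by linarith
  with k have wk: "w k \<noteq> 0" by auto
  have "2 ^ n * (t * eucl_norm_n n w) / \<bar>w k\<bar> \<le> 2 ^ n * (t * n)"
    using k wk assms by (simp add: field_simps mult_left_mono)
  also have "\<dots> = slab_const_n n * t * (unit_ball_vol n / 2 ^ n)"
  proof -
    have "(4::real) ^ n = 2 ^ n * 2 ^ n" by (simp flip: power_mult_distrib)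
    moreover have "unit_ball_vol n \<noteq> 0" using unit_ball_vol_pos[of n] by linarith
    ultimately show ?thesis by (simp add: slab_const_n_def field_simps)
  qed
  also have "\<dots> \<le> slab_const_n n * t * measure (lebesgue_n n) (ball_n n)"
    using measure_ball_n_ge slab_const_n_nonneg assms by (intro mult_left_mono) auto
  finally have "2 ^ n * (t * eucl_norm_n n w) / \<bar>w k\<bar> / measure (lebesgue_n n) (ball_n n)
      \<le> slab_const_n n * t"
    using measure_ball_n_pos[of n] by (simp only: pos_divide_le_eq)
  then have "ennreal (2 ^ n * (t * eucl_norm_n n w) / \<bar>w k\<bar>) / ennreal (measure (lebesgue_n n) (ball_n n))
      \<le> ennreal (slab_const_n n * t)"
    using measure_ball_n_pos w_pos assms by (simp add: divide_ennreal ennreal_leI)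
  moreover have "emeasure (PiM {..<n} (\<lambda>_. lborel))
      {x \<in> space (PiM {..<n} (\<lambda>_. lborel)). (\<forall>i\<in>{..<n}. \<bar>x i\<bar> \<le> 1) \<and> \<bar>\<Sum>i\<in>{..<n}. w i * x i\<bar> < t * eucl_norm_n n w}
      \<le> ennreal (2 ^ n * (t * eucl_norm_n n w) / \<bar>w k\<bar>)"
    using emeasure_PiM_cube_slab_le[of "{..<n}" k w "t * eucl_norm_n n w"] k wk assms w_pos by simp
  ultimately show ?thesis
    using emeasure_unif_sphere_n_le_cube_slab[of n w "t * eucl_norm_n n w"]
    by (meson divide_right_mono_ennreal order.trans)
qed

section \<open>Lower Lipschitz bound in expectation\<close>

lemma emeasure_UN_le_card_mult:
  fixes c :: real
  assumes "finite I" "\<And>i. i \<in> I \<Longrightarrow> A i \<in> sets M"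
    and "\<And>i. i \<in> I \<Longrightarrow> emeasure M (A i) \<le> ennreal c" "c \<ge> 0"
  shows "emeasure M (\<Union>i\<in>I. A i) \<le> ennreal (card I * c)"
proof -
  have "emeasure M (\<Union>i\<in>I. A i) \<le> (\<Sum>i\<in>I. emeasure M (A i))"
    using assms(1,2) by (intro emeasure_subadditive_finite) auto
  also have "\<dots> \<le> (\<Sum>i\<in>I. ennreal c)" using assms(3) by (rule sum_mono)
  also have "\<dots> = ennreal (card I * c)"
    using assms(4) by (simp add: ennreal_mult' ennreal_of_nat_eq_real_of_nat)
  finally show ?thesis .
qed

lemma (in prob_space) emeasure_pair_measure_le_if_slices_le:
  assumes "prob_space N" "X \<in> sets (N \<Otimes>\<^sub>M M)"
    and "\<And>x. x \<in> space N \<Longrightarrow> emeasure M (Pair x -` X) \<le> r"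
  shows "emeasure (N \<Otimes>\<^sub>M M) X \<le> r"
proof -
  have "emeasure (N \<Otimes>\<^sub>M M) X = (\<integral>\<^sup>+x. emeasure M (Pair x -` X) \<partial>N)"
    using assms(2) by (rule emeasure_pair_measure_alt)
  also have "\<dots> \<le> (\<integral>\<^sup>+x. r \<partial>N)" using assms(3) by (intro nn_integral_mono)
  also have "\<dots> = r" using prob_space.emeasure_space_1[OF assms(1)] by simp
  finally show ?thesis .
qed

lemma nn_integral_powr_ge_if_ge_on_set:
  assumes "G \<in> sets M" "ennreal q \<le> emeasure M G" "c \<ge> 0" "p \<ge> 0"
    and "\<And>w. w \<in> G \<Longrightarrow> c \<le> f w"
  shows "ennreal (c powr p) * ennreal q \<le> (\<integral>\<^sup>+ w. ennreal (f w powr p) \<partial>M)"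
proof -
  have "ennreal (c powr p) * ennreal q \<le> ennreal (c powr p) * emeasure M G"
    using assms(2) by (rule mult_left_mono) simp
  also have "\<dots> = (\<integral>\<^sup>+ w. ennreal (c powr p) * indicator G w \<partial>M)"
    using assms(1) by (rule nn_integral_cmult_indicator[symmetric])
  also have "\<dots> \<le> (\<integral>\<^sup>+ w. ennreal (f w powr p) \<partial>M)"
    using assms(3-5) by (intro nn_integral_mono) (auto simp: indicator_def intro: ennreal_leI powr_mono2)
  finally show ?thesis .
qed

lemma half_powr_le: "0 \<le> c \<Longrightarrow> 1 \<le> p \<Longrightarrow> (c / 2) powr p \<le> c powr p / (2 :: real)"
proof -
  assume "0 \<le> c" "1 \<le> p"
  then have "2 powr 1 \<le> 2 powr p" by (intro powr_mono) auto
  then have "c powr p / 2 powr p \<le> c powr p / 2" by (intro divide_left_mono) auto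
  then show ?thesis using \<open>0 \<le> c\<close> by (simp add: powr_divide)
qed

definition good_direction :: "real \<Rightarrow> nat \<Rightarrow> 'a list \<Rightarrow> 'a list \<Rightarrow> 'a::real_inner \<Rightarrow> bool" where
  "good_direction t n xs ys a \<longleftrightarrow>
     (\<forall>i<n. \<forall>j<n. t * norm (xs ! i - ys ! j) \<le> \<bar>inner a (xs ! i - ys ! j)\<bar>)"

definition good_weights :: "real \<Rightarrow> nat \<Rightarrow> 'a list \<Rightarrow> 'a list \<Rightarrow> 'a::real_inner \<Rightarrow> (nat \<Rightarrow> real) \<Rightarrow> bool" where
  "good_weights t n xs ys a b \<longleftrightarrow>
     (\<forall>\<sigma>\<in>{..<n} \<rightarrow>\<^sub>E {..<n}. \<forall>\<tau>\<in>{..<n} \<rightarrow>\<^sub>E {..<n}.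
        t * eucl_norm_n n (\<lambda>i. inner a (xs ! \<sigma> i - ys ! \<tau> i))
          \<le> \<bar>\<Sum>i<n. b i * inner a (xs ! \<sigma> i - ys ! \<tau> i)\<bar>)"

lemma emeasure_not_good_direction_le:
  fixes xs ys :: "'a::euclidean_space list"
  assumes "t \<ge> 0"
  shows "emeasure unif_sphere {a. \<not> good_direction t n xs ys a}
     \<le> ennreal ((real n)\<^sup>2 * slab_const TYPE('a) * t)"
proof -
  define slab where "slab = (\<lambda>(i, j). {a::'a. \<bar>inner a (xs ! i - ys ! j)\<bar> < t * norm (xs ! i - ys ! j)})"
  have "{a. \<not> good_direction t n xs ys a} = (\<Union>k\<in>{..<n} \<times> {..<n}. slab k)"
    by (auto simp: good_direction_def slab_def not_le)
  also have "emeasure unif_sphere \<dots> \<le> ennreal (card ({..<n} \<times> {..<n}) * (slab_const TYPE('a) * t))"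
  proof (intro emeasure_UN_le_card_mult)
    show "slab k \<in> sets unif_sphere" for k
      unfolding slab_def by (cases k) simp
    show "emeasure unif_sphere (slab k) \<le> ennreal (slab_const TYPE('a) * t)" for k
      unfolding slab_def using emeasure_unif_sphere_slab_le assms by (cases k) simp
  qed (use assms slab_const_pos[where 'a='a] in auto)
  finally show ?thesis by (simp add: power2_eq_square mult.assoc)
qed

lemma emeasure_not_good_weights_le:
  fixes xs ys :: "'a::euclidean_space list"
  assumes "t \<ge> 0"
  shows "emeasure (unif_sphere_n n) {b \<in> space (unif_sphere_n n). \<not> good_weights t n xs ys a b}
     \<le> ennreal ((real n ^ n)\<^sup>2 * slab_const_n n * t)"
proof -
  define F where "F = {..<n} \<rightarrow>\<^sub>E {..<n}"
  define v where "v = (\<lambda>(\<sigma> :: nat \<Rightarrow> nat, \<tau> :: nat \<Rightarrow> nat) (i :: nat). inner a (xs ! \<sigma> i - ys ! \<tau> i))"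
  define slab where "slab k = {b \<in> space (unif_sphere_n n). \<bar>\<Sum>i<n. b i * v k i\<bar> < t * eucl_norm_n n (v k)}" for k
  have "{b \<in> space (unif_sphere_n n). \<not> good_weights t n xs ys a b} = (\<Union>k\<in>F \<times> F. slab k)"
    by (fastforce simp: good_weights_def slab_def v_def F_def not_le)
  also have "emeasure (unif_sphere_n n) \<dots> \<le> ennreal (card (F \<times> F) * (slab_const_n n * t))"
  proof (intro emeasure_UN_le_card_mult)
    show "slab k \<in> sets (unif_sphere_n n)" for k
      unfolding slab_def by measurable
  qed (use emeasure_unif_sphere_n_slab_le assms slab_const_n_nonneg in \<open>auto simp: slab_def F_def finite_PiE\<close>)
  finally show ?thesis by (simp add: F_def card_cartesian_product card_PiE power2_eq_square mult.assoc)
qed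

lemma pred_good_direction [measurable]:
  "Measurable.pred borel (good_direction t n xs (ys :: 'a::euclidean_space list))"
  unfolding good_direction_def by measurable

lemma sets_not_good_weights:
  fixes xs ys :: "'a::euclidean_space list" and n :: nat
  defines "M \<equiv> (unif_sphere :: 'a measure) \<Otimes>\<^sub>M unif_sphere_n n"
  shows "{w \<in> space M. \<not> good_weights t n xs ys (fst w) (snd w)} \<in> sets M"
proof -
  have slab_sets: "{w \<in> space M. \<bar>\<Sum>i<n. snd w i * inner (fst w) (c i)\<bar>
      < t * eucl_norm_n n (\<lambda>i. inner (fst w) (c i))} \<in> sets M" for c :: "nat \<Rightarrow> 'a"
    unfolding M_def eucl_norm_n_def by measurable
  have "{w \<in> space M. \<not> good_weights t n xs ys (fst w) (snd w)}
    = (\<Union>(\<sigma>, \<tau>)\<in>({..<n} \<rightarrow>\<^sub>E {..<n}) \<times> ({..<n} \<rightarrow>\<^sub>E {..<n}).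
      {w \<in> space M. \<bar>\<Sum>i<n. snd w i * inner (fst w) (xs ! \<sigma> i - ys ! \<tau> i)\<bar>
        < t * eucl_norm_n n (\<lambda>i. inner (fst w) (xs ! \<sigma> i - ys ! \<tau> i))})"
    by (auto simp: good_weights_def not_le)
  also have "\<dots> \<in> sets M"
    using slab_sets by (intro sets.finite_UN) (auto simp: finite_PiE)
  finally show ?thesis .
qed

lemma emeasure_pair_not_good_weights_le:
  fixes xs ys :: "'a::euclidean_space list" and n :: nat
  assumes "t \<ge> 0"
  defines "M \<equiv> (unif_sphere :: 'a measure) \<Otimes>\<^sub>M unif_sphere_n n"
  shows "emeasure M {w \<in> space M. \<not> good_weights t n xs ys (fst w) (snd w)}
    \<le> ennreal ((real n ^ n)\<^sup>2 * slab_const_n n * t)"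
  unfolding M_def
proof (rule prob_space.emeasure_pair_measure_le_if_slices_le)
  show "prob_space (unif_sphere_n n)" "prob_space (unif_sphere :: 'a measure)"
    by (rule prob_space_unif_sphere_n prob_space_unif_sphere)+
  fix a :: 'a
  have "Pair a -` {w \<in> space (unif_sphere \<Otimes>\<^sub>M unif_sphere_n n). \<not> good_weights t n xs ys (fst w) (snd w)}
    = {b \<in> space (unif_sphere_n n). \<not> good_weights t n xs ys a b}"
    by (auto simp: space_pair_measure)
  then show "emeasure (unif_sphere_n n) (Pair a -`
      {w \<in> space (unif_sphere \<Otimes>\<^sub>M unif_sphere_n n). \<not> good_weights t n xs ys (fst w) (snd w)})
    \<le> ennreal ((real n ^ n)\<^sup>2 * slab_const_n n * t)"
    using emeasure_not_good_weights_le[OF assms(1)] by simp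
qed (rule sets_not_good_weights)

lemma emeasure_good_event_ge:
  fixes xs ys :: "'a::euclidean_space list"
  assumes "t \<ge> 0" "((real n)\<^sup>2 * slab_const TYPE('a) + (real n ^ n)\<^sup>2 * slab_const_n n) * t \<le> 1 / 2"
  defines "M \<equiv> (unif_sphere :: 'a measure) \<Otimes>\<^sub>M unif_sphere_n n"
  defines "G \<equiv> {w \<in> space M. good_direction t n xs ys (fst w) \<and> good_weights t n xs ys (fst w) (snd w)}"
  shows "G \<in> sets M" "ennreal (1 / 2) \<le> emeasure M G"
proof -
  interpret A: prob_space "unif_sphere :: 'a measure" by (rule prob_space_unif_sphere)
  interpret B: prob_space "unif_sphere_n n" by (rule prob_space_unif_sphere_n)
  interpret AB: pair_prob_space "unif_sphere :: 'a measure" "unif_sphere_n n" ..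
  define bad_a where "bad_a = {a::'a. \<not> good_direction t n xs ys a} \<times> space (unif_sphere_n n)"
  define bad_b where "bad_b = {w \<in> space M. \<not> good_weights t n xs ys (fst w) (snd w)}"
  have "bad_a \<in> sets M" unfolding bad_a_def M_def by measurable
  moreover have "bad_b \<in> sets M" unfolding bad_b_def M_def by (rule sets_not_good_weights)
  ultimately have bad_sets: "bad_a \<in> sets M" "bad_b \<in> sets M" .
  have G_eq: "G = space M - bad_a - bad_b"
    by (auto simp: G_def bad_a_def bad_b_def M_def space_pair_measure)
  then show G_sets: "G \<in> sets M" using bad_sets by auto
  have "emeasure M bad_a = emeasure unif_sphere {a::'a. \<not> good_direction t n xs ys a}"
    unfolding bad_a_def M_def by (subst B.emeasure_pair_measure_Times) (auto simp: B.emeasure_space_1)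
  also have "\<dots> \<le> ennreal ((real n)\<^sup>2 * slab_const TYPE('a) * t)"
    using assms(1) by (rule emeasure_not_good_direction_le)
  finally have measure_bad_a: "measure M bad_a \<le> (real n)\<^sup>2 * slab_const TYPE('a) * t"
    using assms(1) slab_const_pos[where 'a='a] by (simp add: AB.emeasure_eq_measure M_def)
  have "measure M bad_b \<le> (real n ^ n)\<^sup>2 * slab_const_n n * t"
    using emeasure_pair_not_good_weights_le[OF assms(1), where xs=xs and ys=ys and n=n]
      assms(1) slab_const_n_nonneg[of n]
    by (simp add: AB.emeasure_eq_measure M_def bad_b_def)
  with measure_bad_a have "measure M bad_a + measure M bad_b \<le> 1 / 2"
    using assms(2) by (simp add: algebra_simps)
  moreover have "measure M (space M - G) \<le> measure M bad_a + measure M bad_b"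
    using bad_sets G_eq unfolding M_def
    by (intro order.trans[OF AB.finite_measure_mono measure_Un_le]) auto
  ultimately have "1 / 2 \<le> measure M G"
    using AB.prob_compl[OF G_sets[unfolded M_def]] by (simp add: M_def)
  then show "ennreal (1 / 2) \<le> emeasure M G"
    unfolding M_def AB.emeasure_eq_measure by (rule ennreal_leI)
qed

lemma obtain_index_map:
  assumes "set xs \<subseteq> set ys"
  obtains \<sigma> where "\<sigma> \<in> {..<length xs} \<rightarrow>\<^sub>E {..<length ys}" "\<And>i. i < length xs \<Longrightarrow> ys ! \<sigma> i = xs ! i"
proof -
  have "\<forall>i\<in>{..<length xs}. \<exists>k. k < length ys \<and> ys ! k = xs ! i"
    using assms by (auto simp: in_set_conv_nth[symmetric])
  then obtain f where "\<forall>i\<in>{..<length xs}. f i < length ys \<and> ys ! f i = xs ! i"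
    by (metis bchoice)
  then show thesis by (intro that[of "restrict f {..<length xs}"]) auto
qed

lemma obtain_ge_average:
  fixes f :: "nat \<Rightarrow> real"
  assumes "n > 0" "W \<le> (\<Sum>j<n. f j)"
  obtains j where "j < n" "W / n \<le> f j"
proof -
  have "\<exists>j<n. W / n \<le> f j"
  proof (rule ccontr)
    assume "\<not> ?thesis"
    then have "(\<Sum>j<n. f j) < (\<Sum>j<n. W / n)"
      using assms(1) by (intro sum_strict_mono) (auto simp: not_le)
    then show False using assms by simp
  qed
  then show thesis using that by blast
qed

text \<open>The enumerations of the padded multisets sorted by \<open>inner a\<close>, located inside the fixed
  enumerations \<open>xs\<close> and \<open>ys\<close> by \<open>\<sigma>\<close> and \<open>\<tau>\<close>, form a matching along which \<open>Sz\<close> is linear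
  and whose cost bounds the Wasserstein distance.\<close>
lemma obtain_sorting_matching:
  fixes xs ys :: "(real ^ 'd) list"
  assumes "size X \<le> n" "size X' \<le> n" and xs: "mset xs = pad z n X" and ys: "mset ys = pad z n X'"
  obtains \<sigma> \<tau> where "\<sigma> \<in> {..<n} \<rightarrow>\<^sub>E {..<n}" "\<tau> \<in> {..<n} \<rightarrow>\<^sub>E {..<n}"
    "Sz z n X a b - Sz z n X' a b = (\<Sum>i<n. b i * inner a (xs ! \<sigma> i - ys ! \<tau> i))"
    "W1z z n X X' \<le> (\<Sum>i<n. l1norm (xs ! \<sigma> i - ys ! \<tau> i))"
proof -
  obtain us where us: "mset us = pad z n X" "sorted (map (inner a) us)"
    using obtain_sorted_enumeration by blast
  obtain vs where vs: "mset vs = pad z n X'" "sorted (map (inner a) vs)"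
    using obtain_sorted_enumeration by blast
  have len: "length us = n" "length vs = n" "length xs = n" "length ys = n"
    using us(1) vs(1) xs ys assms(1,2) by (simp_all add: length_eq_if_mset_eq_pad)
  obtain \<sigma> where \<sigma>: "\<sigma> \<in> {..<n} \<rightarrow>\<^sub>E {..<n}" "\<And>i. i < n \<Longrightarrow> xs ! \<sigma> i = us ! i"
    using obtain_index_map[of us xs] us(1) xs len by (metis set_mset_mset order_refl)
  obtain \<tau> where \<tau>: "\<tau> \<in> {..<n} \<rightarrow>\<^sub>E {..<n}" "\<And>i. i < n \<Longrightarrow> ys ! \<tau> i = vs ! i"
    using obtain_index_map[of vs ys] vs(1) ys len by (metis set_mset_mset order_refl)
  show thesis
  proof (rule that[OF \<sigma>(1) \<tau>(1)])
    show "Sz z n X a b - Sz z n X' a b = (\<Sum>i<n. b i * inner a (xs ! \<sigma> i - ys ! \<tau> i))"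
      using \<sigma>(2) \<tau>(2) len
      by (simp add: Sz_eq_sum_sort[OF us(1)] Sz_eq_sum_sort[OF vs(1)] sorted_sort_id us(2) vs(2)
          inner_diff_right right_diff_distrib flip: sum_subtractf)
    show "W1z z n X X' \<le> (\<Sum>i<n. l1norm (xs ! \<sigma> i - ys ! \<tau> i))"
      unfolding W1z_def using W1_le[OF us(1) vs(1)] len \<sigma>(2) \<tau>(2) by simp
  qed
qed

lemma Sz_diff_ge_if_good:
  fixes xs ys :: "(real ^ 'd) list"
  assumes "n > 0" "t \<ge> 0" "size X \<le> n" "size X' \<le> n"
    and xs: "mset xs = pad z n X" and ys: "mset ys = pad z n X'"
    and good_a: "good_direction t n xs ys a" and good_b: "good_weights t n xs ys a b"
  shows "t\<^sup>2 * W1z z n X X' / (n * CARD('d)) \<le> \<bar>Sz z n X a b - Sz z n X' a b\<bar>"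
proof -
  obtain \<sigma> \<tau> where \<sigma>: "\<sigma> \<in> {..<n} \<rightarrow>\<^sub>E {..<n}" and \<tau>: "\<tau> \<in> {..<n} \<rightarrow>\<^sub>E {..<n}"
    and Sz_diff: "Sz z n X a b - Sz z n X' a b = (\<Sum>i<n. b i * inner a (xs ! \<sigma> i - ys ! \<tau> i))"
    and W: "W1z z n X X' \<le> (\<Sum>i<n. l1norm (xs ! \<sigma> i - ys ! \<tau> i))"
    using obtain_sorting_matching[OF assms(3,4) xs ys] by blast
  define v where "v i = inner a (xs ! \<sigma> i - ys ! \<tau> i)" for i
  obtain j where j: "j < n" "W1z z n X X' / n \<le> l1norm (xs ! \<sigma> j - ys ! \<tau> j)"
    using obtain_ge_average[OF assms(1) W] by blast
  define e where "e = xs ! \<sigma> j - ys ! \<tau> j"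
  have "W1z z n X X' / n \<le> CARD('d) * norm e"
    using j(2) l1norm_le_CARD_norm[of e] by (simp add: e_def)
  then have "W1z z n X X' / (n * CARD('d)) \<le> norm e"
    using assms(1) by (simp add: field_simps mult.commute)
  then have "t * (t * (W1z z n X X' / (n * CARD('d)))) \<le> t * (t * norm e)"
    using assms(2) by (intro mult_left_mono) auto
  then have "t\<^sup>2 * W1z z n X X' / (n * CARD('d)) \<le> t * (t * norm e)"
    by (simp add: power2_eq_square mult.assoc)
  also have "\<dots> \<le> t * \<bar>v j\<bar>"
    using good_a \<sigma> \<tau> j(1) assms(2)
    by (intro mult_left_mono) (auto simp: good_direction_def v_def e_def PiE_iff)
  also have "\<dots> \<le> t * eucl_norm_n n v"
    using abs_le_eucl_norm_n[OF j(1)] assms(2) by (rule mult_left_mono)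
  also have "\<dots> \<le> \<bar>\<Sum>i<n. b i * v i\<bar>"
    using good_b \<sigma> \<tau> by (auto simp: good_weights_def v_def[abs_def])
  finally show ?thesis by (simp add: Sz_diff v_def)
qed

definition good_threshold :: "nat \<Rightarrow> 'd::finite itself \<Rightarrow> real" where
  "good_threshold n _ =
     1 / (2 * ((real n)\<^sup>2 * slab_const TYPE(real ^ 'd) + (real n ^ n)\<^sup>2 * slab_const_n n) + 2)"

lemma good_threshold_pos: "good_threshold n TYPE('d::finite) > 0"
  and good_threshold_small:
    "((real n)\<^sup>2 * slab_const TYPE(real ^ 'd) + (real n ^ n)\<^sup>2 * slab_const_n n)
       * good_threshold n TYPE('d) \<le> 1 / 2"
proof -
  define K where "K = (real n)\<^sup>2 * slab_const TYPE(real ^ 'd) + (real n ^ n)\<^sup>2 * slab_const_n n"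
  have K: "K \<ge> 0"
    unfolding K_def using slab_const_pos[where 'a="real ^ 'd"] slab_const_n_nonneg[of n] by simp
  have t: "good_threshold n TYPE('d) = 1 / (2 * K + 2)" by (simp add: good_threshold_def K_def)
  show "good_threshold n TYPE('d) > 0" unfolding t using K by simp
  show "((real n)\<^sup>2 * slab_const TYPE(real ^ 'd) + (real n ^ n)\<^sup>2 * slab_const_n n)
       * good_threshold n TYPE('d) \<le> 1 / 2"
    unfolding K_def[symmetric] t using K by (simp add: field_simps)
qed

definition lower_lipschitz_const :: "nat \<Rightarrow> 'd::finite itself \<Rightarrow> real" where
  "lower_lipschitz_const n T = (good_threshold n T)\<^sup>2 / (n * CARD('d)) / 2"

lemma lower_lipschitz_const_pos: "n > 0 \<Longrightarrow> lower_lipschitz_const n TYPE('d::finite) > 0"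
  using good_threshold_pos[of n, where 'd='d] by (simp add: lower_lipschitz_const_def)

lemma Sz_lower_lipschitz_in_expectation:
  fixes X X' :: "(real ^ 'd) multiset"
  assumes "n > 0" "p \<ge> 1" "size X \<le> n" "size X' \<le> n" "W1z z n X X' > 0"
  shows "ennreal (lower_lipschitz_const n TYPE('d) powr p)
    \<le> (\<integral>\<^sup>+ w. ennreal ((\<bar>Sz z n X (fst w) (snd w) - Sz z n X' (fst w) (snd w)\<bar> / W1z z n X X') powr p)
          \<partial>(unif_sphere \<Otimes>\<^sub>M unif_sphere_n n))"
proof -
  define t where "t = good_threshold n TYPE('d)"
  define c where "c = t\<^sup>2 / (n * CARD('d))"
  have "t > 0" unfolding t_def by (rule good_threshold_pos)
  then have "c \<ge> 0" by (simp add: c_def)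
  obtain xs ys where xs: "mset xs = pad z n X" and ys: "mset ys = pad z n X'"
    by (metis ex_mset)
  define G where "G = {w \<in> space (unif_sphere \<Otimes>\<^sub>M unif_sphere_n n).
    good_direction t n xs ys (fst w) \<and> good_weights t n xs ys (fst w) (snd w)}"
  have "((real n)\<^sup>2 * slab_const TYPE(real ^ 'd) + (real n ^ n)\<^sup>2 * slab_const_n n) * t \<le> 1 / 2"
    unfolding t_def by (rule good_threshold_small)
  from emeasure_good_event_ge[OF less_imp_le[OF \<open>t > 0\<close>] this, where xs=xs and ys=ys]
  have G: "G \<in> sets (unif_sphere \<Otimes>\<^sub>M unif_sphere_n n)"
    "ennreal (1 / 2) \<le> emeasure (unif_sphere \<Otimes>\<^sub>M unif_sphere_n n) G"
    unfolding G_def by simp_all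
  have "c \<le> \<bar>Sz z n X (fst w) (snd w) - Sz z n X' (fst w) (snd w)\<bar> / W1z z n X X'" if "w \<in> G" for w
  proof -
    have "t\<^sup>2 * W1z z n X X' / (n * CARD('d))
        \<le> \<bar>Sz z n X (fst w) (snd w) - Sz z n X' (fst w) (snd w)\<bar>"
      using that Sz_diff_ge_if_good[OF assms(1) less_imp_le[OF \<open>t > 0\<close>] assms(3,4) xs ys]
      by (simp add: G_def)
    then show ?thesis using assms(5) by (simp add: c_def pos_le_divide_eq mult.commute)
  qed
  then have "ennreal (c powr p) * ennreal (1 / 2)
      \<le> (\<integral>\<^sup>+ w. ennreal ((\<bar>Sz z n X (fst w) (snd w) - Sz z n X' (fst w) (snd w)\<bar> / W1z z n X X') powr p)
          \<partial>(unif_sphere \<Otimes>\<^sub>M unif_sphere_n n))"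
    using G \<open>c \<ge> 0\<close> assms(2) by (intro nn_integral_powr_ge_if_ge_on_set) auto
  moreover have "lower_lipschitz_const n TYPE('d) = c / 2"
    by (simp add: lower_lipschitz_const_def c_def t_def)
  then have "lower_lipschitz_const n TYPE('d) powr p \<le> c powr p * (1 / 2)"
    using half_powr_le[OF \<open>c \<ge> 0\<close> assms(2)] by (simp only:)
  then have "ennreal (lower_lipschitz_const n TYPE('d) powr p) \<le> ennreal (c powr p) * ennreal (1 / 2)"
    by (subst ennreal_mult[symmetric]) (auto intro: ennreal_leI)
  ultimately show ?thesis by (rule order.trans[rotated])
qed

theorem mainTheorem4:
  fixes n :: nat and p :: real and \<Omega> :: "(real ^ 'd) set" and z :: "real ^ 'd"
  assumes "n \<ge> 1" and "p \<ge> 1" and "compact \<Omega>" and "z \<notin> \<Omega>"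
  shows "(\<exists>L. \<forall>a \<in> sphere 0 1. \<forall>b \<in> sphere_n n.
            \<forall>X \<in> multisets_le n \<Omega>. \<forall>X' \<in> multisets_le n \<Omega>.
              \<bar>Sz z n X a b - Sz z n X' a b\<bar> \<le> L * W1z z n X X')
       \<and> (\<exists>c > 0. \<forall>X \<in> multisets_le n \<Omega>. \<forall>X' \<in> multisets_le n \<Omega>.
              W1z z n X X' > 0 \<longrightarrow>
              ennreal (c powr p) \<le>
                (\<integral>\<^sup>+ w. ennreal ((\<bar>Sz z n X (fst w) (snd w) - Sz z n X' (fst w) (snd w)\<bar>
                                      / W1z z n X X') powr p)
                   \<partial>(unif_sphere \<Otimes>\<^sub>M unif_sphere_n n)))"
proof (intro conjI)
  show "\<exists>L. \<forall>a \<in> sphere 0 1. \<forall>b \<in> sphere_n n.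
            \<forall>X \<in> multisets_le n \<Omega>. \<forall>X' \<in> multisets_le n \<Omega>.
              \<bar>Sz z n X a b - Sz z n X' a b\<bar> \<le> L * W1z z n X X'"
    by (intro exI[of _ 1] ballI) (simp add: Sz_diff_le_W1z multisets_le_def)
  show "\<exists>c > 0. \<forall>X \<in> multisets_le n \<Omega>. \<forall>X' \<in> multisets_le n \<Omega>.
              W1z z n X X' > 0 \<longrightarrow>
              ennreal (c powr p) \<le>
                (\<integral>\<^sup>+ w. ennreal ((\<bar>Sz z n X (fst w) (snd w) - Sz z n X' (fst w) (snd w)\<bar>
                                      / W1z z n X X') powr p)
                   \<partial>(unif_sphere \<Otimes>\<^sub>M unif_sphere_n n))"
    using assms(1,2)
    by (intro exI[of _ "lower_lipschitz_const n TYPE('d)"] conjI lower_lipschitz_const_pos ballI impI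
        Sz_lower_lipschitz_in_expectation) (auto simp: multisets_le_def)
qed

end
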